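(* Let $E$ be an ordered normed space and $n\ge1$. Then for every $\mathbf{x}\in E^{\otimes n}$, $\|\mathbf{x}\|_{\pi+,E}=\|\mathbf{x}\|_{\pi,E^+}$; that is, the positive projective norm $\|\cdot\|_{\pi+}$ on $E^{\otimes n}$ coincides with the (ordinary) projective tensor norm of the normed space $E^+$.
   Context: All vector spaces are real. An ordered normed space is a real normed space $E$ together with a closed convex cone $E_+\subseteq E$ (its elements are called positive, written $x\ge0$) such that $E=E_+-E_+$ and such that, writing $\|x\|_+:=\inf\{\|y\|+\|z\|: x=y-z,\ y,z\in E_+\}$, the constant $c_+(E):=\sup\{\|x\|_+:\|x\|\le1\}$ is finite. $E^+$ denotes the vector space $E$ equipped with the norm $\|\cdot\|_+$. $E^{\otimes n}$ is the algebraic $n$-th tensor power of $E$. For a normed space $F$, the projective norm on $F^{\otimes n}$ is $\|\mathbf{x}\|_{\pi,F}:=\inf\{\sum_{k=1}^N|a_k|\,\|x_{1k}\|\cdots\|x_{nk}\| : \mathbf{x}=\sum_{k=1}^N a_k\,x_{1k}\otimes\cdots\otimes x_{nk},\ a_k\in\mathbb{R},\ x_{ik}\in F\}$. The positive projective norm on $E^{\otimes n}$ is $\|\mathbf{x}\|_{\pi+,E}:=\inf\{\sum_{k=1}^N|a_k|\,\|x_{1k}\|\cdots\|x_{nk}\| : \mathbf{x}=\sum_{k=1}^N a_k\,x_{1k}\otimes\cdots\otimes x_{nk},\ a_k\in\mathbb{R},\ x_{ik}\in E_+\}$ (norms $\|\cdot\|$ of $E$). *)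

theory Defs
  imports "HOL-Analysis.Analysis"
begin

text \<open>An ordered normed space: a real normed space together with a closed convex cone C
  of positive elements, such that E = C - C and c_+(E) is finite.\<close>

definition norm_plus :: "'a::real_normed_vector set \<Rightarrow> 'a \<Rightarrow> real" where
  "norm_plus C x = Inf {norm y + norm z | y z. y \<in> C \<and> z \<in> C \<and> x = y - z}"

definition ordered_normed_space :: "'a::real_normed_vector set \<Rightarrow> bool" where
  "ordered_normed_space C \<longleftrightarrow>
     closed C \<and> convex_cone C \<and>
     (\<forall>x. \<exists>y z. y \<in> C \<and> z \<in> C \<and> x = y - z) \<and>
     bdd_above {norm_plus C x | x. norm x \<le> 1}"

text \<open>A tensor is given by a finite formal sum
  \<open>\<Sum>k a_k x_{1k} \<otimes> ... \<otimes> x_{nk}\<close>, encoded as a list of pairs (a_k, [x_{1k},...,x_{nk}]).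
  Two such sums denote the same element of E^{\<otimes>n} iff every n-linear form takes
  the same value on them (universal property: the n-linear forms are exactly the
  linear functionals on E^{\<otimes>n}, and these separate points).\<close>

definition multilinear_form :: "nat \<Rightarrow> ('a::real_vector list \<Rightarrow> real) \<Rightarrow> bool" where
  "multilinear_form n \<phi> \<longleftrightarrow>
     (\<forall>xs i u v (a::real) b. length xs = n \<longrightarrow> i < n \<longrightarrow>
        \<phi> (xs[i := a *\<^sub>R u + b *\<^sub>R v]) = a * \<phi> (xs[i := u]) + b * \<phi> (xs[i := v]))"

definition tensor_rep :: "nat \<Rightarrow> (real \<times> 'a list) list \<Rightarrow> bool" where
  "tensor_rep n R \<longleftrightarrow> (\<forall>(a, xs) \<in> set R. length xs = n)"

definition tensor_eval :: "('a list \<Rightarrow> real) \<Rightarrow> (real \<times> 'a list) list \<Rightarrow> real" where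
  "tensor_eval \<phi> R = (\<Sum>(a, xs) \<leftarrow> R. a * \<phi> xs)"

definition tensor_eq :: "nat \<Rightarrow> (real \<times> 'a::real_vector list) list \<Rightarrow> (real \<times> 'a list) list \<Rightarrow> bool" where
  "tensor_eq n R S \<longleftrightarrow> (\<forall>\<phi>. multilinear_form n \<phi> \<longrightarrow> tensor_eval \<phi> R = tensor_eval \<phi> S)"

definition rep_cost :: "('a \<Rightarrow> real) \<Rightarrow> (real \<times> 'a list) list \<Rightarrow> real" where
  "rep_cost N R = (\<Sum>(a, xs) \<leftarrow> R. \<bar>a\<bar> * prod_list (map N xs))"

text \<open>Projective norm on F^{\<otimes>n} where F is E with the norm N, evaluated at the tensor
  represented by R.\<close>
definition proj_norm :: "('a::real_vector \<Rightarrow> real) \<Rightarrow> nat \<Rightarrow> (real \<times> 'a list) list \<Rightarrow> real" where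
  "proj_norm N n R = Inf {rep_cost N S | S. tensor_rep n S \<and> tensor_eq n S R}"

definition pos_proj_norm :: "'a::real_normed_vector set \<Rightarrow> nat \<Rightarrow> (real \<times> 'a list) list \<Rightarrow> real" where
  "pos_proj_norm C n R = Inf {rep_cost norm S | S. tensor_rep n S \<and>
       (\<forall>(a, xs) \<in> set S. set xs \<subseteq> C) \<and> tensor_eq n S R}"

end

theory Submission
  imports Defs
begin

text \<open>Splitting every factor of a representation \<open>\<Sum>k a\<^sub>k x\<^sub>1\<^sub>k \<otimes> \<dots> \<otimes> x\<^sub>n\<^sub>k\<close>
  as \<open>x\<^sub>i\<^sub>k = y\<^sub>i\<^sub>k - z\<^sub>i\<^sub>k\<close> with \<open>y\<^sub>i\<^sub>k, z\<^sub>i\<^sub>k\<close> positive and multiplying out gives a positive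
  representation of the same tensor whose cost is \<open>\<Sum>k \<bar>a\<^sub>k\<bar> \<Prod>i (\<parallel>y\<^sub>i\<^sub>k\<parallel> + \<parallel>z\<^sub>i\<^sub>k\<parallel>)\<close>.
  Choosing the splittings within \<open>d\<close> of optimal and letting \<open>d \<rightarrow> 0\<close> shows that the positive
  projective norm is at most the projective norm of \<open>E\<^sup>+\<close>. Conversely \<open>\<parallel>x\<parallel>\<^sub>+ \<le> \<parallel>x\<parallel>\<close> for
  positive \<open>x\<close>, so every positive representation costs at least as much in \<open>E\<^sup>+\<close>.\<close>

lemma tensor_eval_append: "tensor_eval \<phi> (R @ S) = tensor_eval \<phi> R + tensor_eval \<phi> S"
  by (simp add: tensor_eval_def)

lemma tensor_eval_concat: "tensor_eval \<phi> (concat Rs) = sum_list (map (tensor_eval \<phi>) Rs)"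
  by (induction Rs) (simp_all add: tensor_eval_append, simp add: tensor_eval_def)

lemma tensor_eval_map_Cons:
  "tensor_eval \<phi> (map (\<lambda>(b, ws). (b, y # ws)) R) = tensor_eval (\<lambda>ws. \<phi> (y # ws)) R"
  by (induction R) (auto simp: tensor_eval_def)

lemma tensor_eval_map_neg_Cons:
  "tensor_eval \<phi> (map (\<lambda>(b, ws). (- b, y # ws)) R) = - tensor_eval (\<lambda>ws. \<phi> (y # ws)) R"
  by (induction R) (auto simp: tensor_eval_def)

lemma rep_cost_append: "rep_cost N (R @ S) = rep_cost N R + rep_cost N S"
  by (simp add: rep_cost_def)

lemma rep_cost_concat: "rep_cost N (concat Rs) = sum_list (map (rep_cost N) Rs)"
  by (induction Rs) (simp_all add: rep_cost_append, simp add: rep_cost_def)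

lemma rep_cost_map_Cons: "rep_cost N (map (\<lambda>(b, ws). (b, y # ws)) R) = N y * rep_cost N R"
  by (induction R) (auto simp: rep_cost_def algebra_simps)

lemma rep_cost_map_neg_Cons: "rep_cost N (map (\<lambda>(b, ws). (- b, y # ws)) R) = N y * rep_cost N R"
  by (induction R) (auto simp: rep_cost_def algebra_simps)

lemma rep_cost_nonneg: "(\<And>x. 0 \<le> N x) \<Longrightarrow> 0 \<le> rep_cost N S"
  unfolding rep_cost_def
  by (rule sum_list_nonneg) (auto intro!: mult_nonneg_nonneg prod_list_nonneg)

lemma prod_list_map_mono:
  fixes f h :: "'b \<Rightarrow> real"
  assumes "\<And>x. x \<in> set xs \<Longrightarrow> 0 \<le> f x \<and> f x \<le> h x"
  shows "prod_list (map f xs) \<le> prod_list (map h xs)"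
  using assms
proof (induction xs)
  case (Cons x xs)
  have "0 \<le> prod_list (map f xs)"
    by (rule prod_list_nonneg) (use Cons.prems in auto)
  moreover have "0 \<le> f x" "f x \<le> h x"
    using Cons.prems by auto
  ultimately show ?case using Cons by (simp add: mult_mono')
qed simp

lemma rep_cost_mono:
  assumes "\<And>a xs x. (a, xs) \<in> set S \<Longrightarrow> x \<in> set xs \<Longrightarrow> 0 \<le> N x \<and> N x \<le> M x"
  shows "rep_cost N S \<le> rep_cost M S"
  unfolding rep_cost_def using assms
  by (intro sum_list_mono) (auto intro!: mult_left_mono prod_list_map_mono)

lemma tendsto_rep_cost_shift:
  "((\<lambda>d. rep_cost (\<lambda>x. N x + d) S) \<longlongrightarrow> rep_cost N S) (at_right 0)"
proof -
  have prod: "((\<lambda>d. prod_list (map (\<lambda>x. N x + d) xs)) \<longlongrightarrow> prod_list (map N xs)) (at_right 0)"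
    for xs :: "'a list"
    by (induction xs) (auto intro!: tendsto_eq_intros)
  show ?thesis
    by (induction S) (auto simp: rep_cost_def intro!: tendsto_eq_intros prod)
qed

lemma multilinear_form_Cons:
  assumes "multilinear_form (Suc m) \<phi>"
  shows "multilinear_form m (\<lambda>ws. \<phi> (y # ws))"
  unfolding multilinear_form_def
proof (intro allI impI)
  fix xs :: "'a list" and i u v and a b :: real
  assume "length xs = m" "i < m"
  then show "\<phi> (y # xs[i := a *\<^sub>R u + b *\<^sub>R v]) = a * \<phi> (y # xs[i := u]) + b * \<phi> (y # xs[i := v])"
    using assms[unfolded multilinear_form_def, rule_format, of "y # xs" "Suc i"] by simp
qed

lemma multilinear_form_diff_head:
  assumes "multilinear_form (Suc m) \<phi>" "length ws = m"
  shows "\<phi> ((y - z) # ws) = \<phi> (y # ws) - \<phi> (z # ws)"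
  using assms(1)[unfolded multilinear_form_def, rule_format, of "y # ws" 0 1 y "-1" z] assms(2)
  by simp

fun expand_diffs :: "real \<Rightarrow> ('a \<times> 'a) list \<Rightarrow> (real \<times> 'a list) list" where
  "expand_diffs a [] = [(a, [])]"
| "expand_diffs a ((y, z) # ps) =
     map (\<lambda>(b, ws). (b, y # ws)) (expand_diffs a ps) @ map (\<lambda>(b, ws). (- b, z # ws)) (expand_diffs a ps)"

lemma tensor_rep_expand_diffs: "length ps = n \<Longrightarrow> tensor_rep n (expand_diffs a ps)"
  by (induction a ps arbitrary: n rule: expand_diffs.induct) (auto simp: tensor_rep_def)

lemma expand_diffs_factors:
  "(b, ws) \<in> set (expand_diffs a ps) \<Longrightarrow> set ws \<subseteq> fst ` set ps \<union> snd ` set ps"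
  by (induction a ps arbitrary: b ws rule: expand_diffs.induct) force+

lemma tensor_eval_expand_diffs:
  assumes "multilinear_form n \<phi>" "length ps = n"
  shows "tensor_eval \<phi> (expand_diffs a ps) = a * \<phi> (map (\<lambda>(y, z). y - z) ps)"
  using assms
proof (induction a ps arbitrary: n \<phi> rule: expand_diffs.induct)
  case (1 a)
  then show ?case by (simp add: tensor_eval_def)
next
  case (2 a y z ps)
  then obtain m where n: "n = Suc m" and m: "length ps = m" by auto
  note IH = "2.IH"(1)[OF multilinear_form_Cons[OF "2.prems"(1)[unfolded n]] m]
  show ?case
    using multilinear_form_diff_head[OF "2.prems"(1)[unfolded n], of "map (\<lambda>(y, z). y - z) ps"] m
    by (simp add: tensor_eval_append tensor_eval_map_Cons tensor_eval_map_neg_Cons IH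
        right_diff_distrib)
qed

lemma rep_cost_expand_diffs:
  "rep_cost N (expand_diffs a ps) = \<bar>a\<bar> * prod_list (map (\<lambda>(y, z). N y + N z) ps)"
  by (induction a ps rule: expand_diffs.induct)
    (simp add: rep_cost_def, simp add: rep_cost_append rep_cost_map_Cons rep_cost_map_neg_Cons algebra_simps)

definition positive_splitting :: "'a::real_vector set \<Rightarrow> ('a \<Rightarrow> 'a \<times> 'a) \<Rightarrow> bool" where
  "positive_splitting C g \<longleftrightarrow> (\<forall>x. fst (g x) \<in> C \<and> snd (g x) \<in> C \<and> x = fst (g x) - snd (g x))"

definition split_rep :: "('a \<Rightarrow> 'a \<times> 'a) \<Rightarrow> (real \<times> 'a list) list \<Rightarrow> (real \<times> 'a list) list" where
  "split_rep g S = concat (map (\<lambda>(a, xs). expand_diffs a (map g xs)) S)"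

lemma tensor_rep_split_rep:
  assumes "tensor_rep n S"
  shows "tensor_rep n (split_rep g S)"
proof -
  have "tensor_rep n (expand_diffs a (map g xs))" if "(a, xs) \<in> set S" for a xs
    using assms that by (intro tensor_rep_expand_diffs) (auto simp: tensor_rep_def)
  then show ?thesis
    unfolding split_rep_def tensor_rep_def by fastforce
qed

lemma split_rep_positive:
  assumes "positive_splitting C g" "(b, ws) \<in> set (split_rep g S)"
  shows "set ws \<subseteq> C"
proof -
  from assms(2) obtain a xs where "(b, ws) \<in> set (expand_diffs a (map g xs))"
    unfolding split_rep_def by auto
  then have "set ws \<subseteq> fst ` g ` set xs \<union> snd ` g ` set xs"
    by (auto dest!: expand_diffs_factors)
  then show ?thesis
    using assms(1) unfolding positive_splitting_def by blast
qed

lemma tensor_eval_split_rep: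
  assumes "positive_splitting C g" "tensor_rep n S" "multilinear_form n \<phi>"
  shows "tensor_eval \<phi> (split_rep g S) = tensor_eval \<phi> S"
proof -
  have diffs: "map (\<lambda>(y, z). y - z) (map g xs) = xs" for xs
    using assms(1) by (induction xs) (auto simp: positive_splitting_def case_prod_beta)
  have "tensor_eval \<phi> (expand_diffs a (map g xs)) = a * \<phi> xs" if "(a, xs) \<in> set S" for a xs
  proof -
    have "length (map g xs) = n"
      using that assms(2) by (auto simp: tensor_rep_def)
    then show ?thesis
      using tensor_eval_expand_diffs[OF assms(3)] diffs by metis
  qed
  then show ?thesis
    unfolding split_rep_def tensor_eval_concat
    by (simp add: tensor_eval_def o_def case_prod_beta cong: map_cong)
qed

lemma rep_cost_split_rep:
  "rep_cost N (split_rep g S) = rep_cost (\<lambda>x. N (fst (g x)) + N (snd (g x))) S"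
  unfolding split_rep_def rep_cost_concat
  by (simp add: rep_cost_expand_diffs o_def case_prod_beta) (simp add: rep_cost_def case_prod_unfold)

lemma pos_proj_norm_le_rep_cost:
  assumes "tensor_rep n S" "\<And>a xs. (a, xs) \<in> set S \<Longrightarrow> set xs \<subseteq> C" "tensor_eq n S R"
  shows "pos_proj_norm C n R \<le> rep_cost norm S"
  unfolding pos_proj_norm_def using assms
  by (intro cInf_lower) (auto intro!: bdd_belowI[of _ 0] rep_cost_nonneg)

lemma pos_proj_norm_le_splitting_cost:
  assumes g: "positive_splitting C g" and S: "tensor_rep n S" "tensor_eq n S R"
  shows "pos_proj_norm C n R \<le> rep_cost (\<lambda>x. norm (fst (g x)) + norm (snd (g x))) S"
proof -
  have eq: "tensor_eq n (split_rep g S) R"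
    using S(2) unfolding tensor_eq_def by (simp add: tensor_eval_split_rep[OF g S(1)])
  have "pos_proj_norm C n R \<le> rep_cost norm (split_rep g S)"
    by (rule pos_proj_norm_le_rep_cost[OF tensor_rep_split_rep[OF S(1)] split_rep_positive[OF g] eq])
  then show ?thesis
    by (simp only: rep_cost_split_rep)
qed

lemma le_pos_proj_norm:
  assumes g: "positive_splitting C g" and R: "tensor_rep n R"
    and bound: "\<And>S. tensor_rep n S \<Longrightarrow> (\<forall>(a, xs) \<in> set S. set xs \<subseteq> C) \<Longrightarrow> tensor_eq n S R \<Longrightarrow>
      c \<le> rep_cost norm S"
  shows "c \<le> pos_proj_norm C n R"
proof -
  have "tensor_eq n (split_rep g R) R"
    unfolding tensor_eq_def by (simp add: tensor_eval_split_rep[OF g R])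
  moreover have "\<forall>(a, xs) \<in> set (split_rep g R). set xs \<subseteq> C"
    using split_rep_positive[OF g] by blast
  ultimately show ?thesis
    unfolding pos_proj_norm_def using tensor_rep_split_rep[OF R] bound
    by (intro cInf_greatest) auto
qed

lemma proj_norm_le_rep_cost:
  assumes "\<And>x. 0 \<le> N x" "tensor_rep n S" "tensor_eq n S R"
  shows "proj_norm N n R \<le> rep_cost N S"
  unfolding proj_norm_def using assms
  by (intro cInf_lower) (auto intro!: bdd_belowI[of _ 0] rep_cost_nonneg)

lemma le_proj_norm:
  assumes "tensor_rep n R" "\<And>S. tensor_rep n S \<Longrightarrow> tensor_eq n S R \<Longrightarrow> c \<le> rep_cost N S"
  shows "c \<le> proj_norm N n R"
  unfolding proj_norm_def using assms
  by (intro cInf_greatest) (auto simp: tensor_eq_def)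

lemma norm_plus_nonneg:
  assumes "y \<in> C" "z \<in> C" "x = y - z"
  shows "0 \<le> norm_plus C x"
  unfolding norm_plus_def using assms by (intro cInf_greatest) auto

lemma norm_plus_le_norm:
  assumes "0 \<in> C" "x \<in> C"
  shows "norm_plus C x \<le> norm x"
proof -
  have "norm x + norm 0 \<in> {norm y + norm z | y z. y \<in> C \<and> z \<in> C \<and> x = y - z}"
    using assms by force
  then show ?thesis
    unfolding norm_plus_def by (auto intro!: cInf_lower2 bdd_belowI[of _ 0])
qed

lemma near_optimal_positive_splitting:
  assumes "\<And>x. \<exists>y z. y \<in> C \<and> z \<in> C \<and> x = y - z" "d > 0"
  obtains g where "positive_splitting C g"
    and "\<And>x. norm (fst (g x)) + norm (snd (g x)) < norm_plus C x + d"
proof -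
  have "\<exists>p. fst p \<in> C \<and> snd p \<in> C \<and> x = fst p - snd p \<and> norm (fst p) + norm (snd p) < norm_plus C x + d"
    for x
  proof -
    let ?costs = "{norm y + norm z | y z. y \<in> C \<and> z \<in> C \<and> x = y - z}"
    have "?costs \<noteq> {}" "Inf ?costs < norm_plus C x + d"
      using assms(1)[of x] assms(2) by (auto simp: norm_plus_def)
    from cInf_lessD[OF this] obtain y z where
      "y \<in> C" "z \<in> C" "x = y - z" "norm y + norm z < norm_plus C x + d"
      by blast
    then show ?thesis by (intro exI[of _ "(y, z)"]) simp
  qed
  then obtain g where "\<forall>x. fst (g x) \<in> C \<and> snd (g x) \<in> C \<and> x = fst (g x) - snd (g x) \<and>
      norm (fst (g x)) + norm (snd (g x)) < norm_plus C x + d"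
    by metis
  then show ?thesis
    using that unfolding positive_splitting_def by blast
qed

lemma pos_proj_norm_le_rep_cost_norm_plus:
  assumes "\<And>x. \<exists>y z. y \<in> C \<and> z \<in> C \<and> x = y - z" "tensor_rep n S" "tensor_eq n S R"
  shows "pos_proj_norm C n R \<le> rep_cost (norm_plus C) S"
proof (rule tendsto_lowerbound[OF tendsto_rep_cost_shift])
  show "\<forall>\<^sub>F d in at_right 0. pos_proj_norm C n R \<le> rep_cost (\<lambda>x. norm_plus C x + d) S"
  proof (rule eventually_at_rightI[of 0 1])
    fix d :: real assume "d \<in> {0<..<1}"
    then obtain g where g: "positive_splitting C g"
      and near: "\<And>x. norm (fst (g x)) + norm (snd (g x)) < norm_plus C x + d"
      using near_optimal_positive_splitting[OF assms(1)] by auto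
    have "pos_proj_norm C n R \<le> rep_cost (\<lambda>x. norm (fst (g x)) + norm (snd (g x))) S"
      using pos_proj_norm_le_splitting_cost[OF g assms(2,3)] .
    also have "\<dots> \<le> rep_cost (\<lambda>x. norm_plus C x + d) S"
      using near by (intro rep_cost_mono) (auto intro: less_imp_le)
    finally show "pos_proj_norm C n R \<le> rep_cost (\<lambda>x. norm_plus C x + d) S" .
  qed simp
qed simp

lemma proj_norm_norm_plus_le_pos_proj_norm:
  assumes "0 \<in> C" and spans: "\<And>x. \<exists>y z. y \<in> C \<and> z \<in> C \<and> x = y - z" and R: "tensor_rep n R"
  shows "proj_norm (norm_plus C) n R \<le> pos_proj_norm C n R"
proof -
  have nonneg: "0 \<le> norm_plus C x" for x
  proof -
    from spans[of x] obtain y z where "y \<in> C" "z \<in> C" "x = y - z"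
      by blast
    then show ?thesis
      by (rule norm_plus_nonneg)
  qed
  obtain g where g: "positive_splitting C g"
    by (rule near_optimal_positive_splitting[OF spans zero_less_one])
  show ?thesis
  proof (rule le_pos_proj_norm[OF g R])
    fix S assume S: "tensor_rep n S" "\<forall>(a, xs) \<in> set S. set xs \<subseteq> C" "tensor_eq n S R"
    have "proj_norm (norm_plus C) n R \<le> rep_cost (norm_plus C) S"
      using nonneg S(1,3) by (rule proj_norm_le_rep_cost)
    also have "\<dots> \<le> rep_cost norm S"
    proof (rule rep_cost_mono)
      fix a xs x assume "(a, xs) \<in> set S" "x \<in> set xs"
      then have "x \<in> C"
        using S(2) by auto
      then show "0 \<le> norm_plus C x \<and> norm_plus C x \<le> norm x"
        using nonneg norm_plus_le_norm[OF \<open>0 \<in> C\<close>] by simp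
    qed
    finally show "proj_norm (norm_plus C) n R \<le> rep_cost norm S" .
  qed
qed

theorem lemma4p4:
  fixes C :: "'a::real_normed_vector set" and n :: nat and R :: "(real \<times> 'a list) list"
  assumes "ordered_normed_space C"
    and "n \<ge> 1"
    and "tensor_rep n R"
  shows "pos_proj_norm C n R = proj_norm (norm_plus C) n R"
proof -
  have cone: "convex_cone C" and spans: "\<And>x. \<exists>y z. y \<in> C \<and> z \<in> C \<and> x = y - z"
    using assms(1) unfolding ordered_normed_space_def by blast+
  from cone have "0 \<in> C"
    by (rule convex_cone_contains_0)
  have "pos_proj_norm C n R \<le> proj_norm (norm_plus C) n R"
    using assms(3) by (rule le_proj_norm) (rule pos_proj_norm_le_rep_cost_norm_plus[OF spans])
  moreover have "proj_norm (norm_plus C) n R \<le> pos_proj_norm C n R"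
    using \<open>0 \<in> C\<close> spans assms(3) by (rule proj_norm_norm_plus_le_pos_proj_norm)
  ultimately show ?thesis
    by (rule antisym)
qed

end
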